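(* Let $\mathcal{S}$ be a semi-primitive subspace of $\mathrm{Mat}_{m,n}(\mathbb{K})$ with $\#\mathbb{K}>\mathrm{urk}(\mathcal{S})$ and $n>0$. Then $\mathcal{S}$ has the column property.
   Context: $\mathrm{urk}$ is the maximal rank of a matrix in the space. Matrix spaces are equivalent ($\sim$) if $\mathcal{M}=P\mathcal{M}'Q$ with $P,Q$ invertible. A subspace is defective if none of its matrices has rank equal to its number of columns. $\mathcal{S}$ is $(r,s)$-decomposed ($0\le r\le m$, $1\le s\le n$) if every $M\in\mathcal{S}$ is of the form $\begin{bmatrix} ?_{r\times s}& C(M)\\ B(M)&0_{(m-r)\times(n-s)}\end{bmatrix}$, with lower space $B(\mathcal{S})$; $\mathcal{S}$ has the column property if for every such $(r,s)$ and every $(r,s)$-decomposed $\mathcal{S}'\sim\mathcal{S}$, the lower space of $\mathcal{S}'$ is defective. For an operator space $\mathcal{T}\subseteq\mathcal{L}(U,V)$: $\mathcal{T}$ is reduced if $\bigcap_{f}\ker f=\{0\}$ and $\sum_f\mathrm{im} f=V$; $c$-defective if $\dim\ker f\geq c$ for all $f\in\mathcal{T}$; its defectiveness index is the greatest such $c$; semi-primitive if reduced and there is no linear hyperplane $U'$ of $U$ with $\{f_{|U'}\mid f\in\mathcal{T}\}$ $c$-defective, $c$ being the defectiveness index. A matrix space is semi-primitive if the corresponding subspace of $\mathcal{L}(\mathbb{K}^n,\mathbb{K}^m)$ is. *)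

theory Defs
  imports "Jordan_Normal_Form.DL_Rank" "Jordan_Normal_Form.Matrix_Kernel"
begin

definition subdim :: "nat \<Rightarrow> 'a::field vec set \<Rightarrow> nat" where
  "subdim n W = vectorspace.dim class_ring ((module_vec TYPE('a) n)\<lparr>carrier := W\<rparr>)"

definition mrank :: "'a::field mat \<Rightarrow> nat" where
  "mrank A = vec_space.rank (dim_row A) A"

definition mat_subspace :: "nat \<Rightarrow> nat \<Rightarrow> 'a::field mat set \<Rightarrow> bool" where
  "mat_subspace m n S \<longleftrightarrow> S \<subseteq> carrier_mat m n \<and> 0\<^sub>m m n \<in> S
     \<and> (\<forall>A\<in>S. \<forall>B\<in>S. A + B \<in> S) \<and> (\<forall>c. \<forall>A\<in>S. c \<cdot>\<^sub>m A \<in> S)"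

definition urk :: "'a::field mat set \<Rightarrow> nat" where
  "urk S = Max (mrank ` S)"

definition mat_space_equiv :: "nat \<Rightarrow> nat \<Rightarrow> 'a::field mat set \<Rightarrow> 'a mat set \<Rightarrow> bool" where
  "mat_space_equiv m n S S' \<longleftrightarrow> (\<exists>P Q. P \<in> carrier_mat m m \<and> Q \<in> carrier_mat n n
      \<and> invertible_mat P \<and> invertible_mat Q \<and> S = (\<lambda>M. P * M * Q) ` S')"

definition defective :: "nat \<Rightarrow> 'a::field mat set \<Rightarrow> bool" where
  "defective s B \<longleftrightarrow> (\<forall>M\<in>B. mrank M \<noteq> s)"

definition rs_decomposed :: "nat \<Rightarrow> nat \<Rightarrow> nat \<Rightarrow> nat \<Rightarrow> 'a::field mat set \<Rightarrow> bool" where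
  "rs_decomposed m n r s S \<longleftrightarrow>
     (\<forall>M\<in>S. \<forall>i j. r \<le> i \<and> i < m \<and> s \<le> j \<and> j < n \<longrightarrow> M $$ (i, j) = 0)"

definition lower_space :: "nat \<Rightarrow> nat \<Rightarrow> nat \<Rightarrow> 'a::field mat set \<Rightarrow> 'a mat set" where
  "lower_space m r s S = (\<lambda>M. mat (m - r) s (\<lambda>(i, j). M $$ (i + r, j))) ` S"

definition column_property :: "nat \<Rightarrow> nat \<Rightarrow> 'a::field mat set \<Rightarrow> bool" where
  "column_property m n S \<longleftrightarrow>
     (\<forall>r s. r \<le> m \<and> 1 \<le> s \<and> s \<le> n \<longrightarrow>
        (\<forall>S'. mat_space_equiv m n S' S \<and> rs_decomposed m n r s S'
              \<longrightarrow> defective s (lower_space m r s S')))"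

definition mat_image :: "nat \<Rightarrow> 'a::field mat \<Rightarrow> 'a vec set" where
  "mat_image n M = {M *\<^sub>v x | x. x \<in> carrier_vec n}"

definition reduced_space :: "nat \<Rightarrow> nat \<Rightarrow> 'a::field mat set \<Rightarrow> bool" where
  "reduced_space m n S \<longleftrightarrow>
     (\<Inter>M\<in>S. mat_kernel M) = {0\<^sub>v n}
     \<and> LinearCombinations.module.span class_ring (module_vec TYPE('a) m) (\<Union>M\<in>S. mat_image n M) = carrier_vec m"

text \<open>c-defective: every operator has kernel of dimension at least c
  (kernels are computed inside a subspace U of K^n, giving the restrictions to U).\<close>
definition c_defective_on :: "nat \<Rightarrow> 'a::field vec set \<Rightarrow> nat \<Rightarrow> 'a mat set \<Rightarrow> bool" where
  "c_defective_on n U c S \<longleftrightarrow> (\<forall>M\<in>S. subdim n (mat_kernel M \<inter> U) \<ge> c)"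

definition defectiveness_index :: "nat \<Rightarrow> 'a::field mat set \<Rightarrow> nat" where
  "defectiveness_index n S = (GREATEST c. c_defective_on n (carrier_vec n) c S)"

definition lin_hyperplane :: "nat \<Rightarrow> 'a::field vec set \<Rightarrow> bool" where
  "lin_hyperplane n U \<longleftrightarrow> VectorSpace.subspace class_ring U (module_vec TYPE('a) n) \<and> subdim n U = n - 1"

definition semi_primitive :: "nat \<Rightarrow> nat \<Rightarrow> 'a::field mat set \<Rightarrow> bool" where
  "semi_primitive m n S \<longleftrightarrow> reduced_space m n S \<and>
     \<not> (\<exists>U. lin_hyperplane n U \<and> c_defective_on n U (defectiveness_index n S) S)"

end

theory Submission
  imports Defs
begin

text \<open>
  Suppose \<open>S' = P S Q\<close> is \<open>(r,s)\<close>-decomposed and its lower space contains a matrix \<open>N\<close> of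
  rank \<open>s\<close>. For any \<open>M \<in> S'\<close> of maximal rank \<open>u = urk S\<close>, all matrices \<open>M + a N\<close> have rank
  at most \<open>u\<close>; since \<open>\<bar>\<bbbK>\<bar> > u\<close> the same holds for the pencil \<open>M + t N\<close> over \<open>\<bbbK>[t]\<close>.
  Bordering a nonsingular \<open>u\<times>u\<close> minor of \<open>M\<close> then lifts every \<open>x \<in> ker M\<close> to a
  polynomial vector \<open>\<Phi>\<close> with \<open>(M + t N) \<Phi> = 0\<close> and \<open>\<Phi>(0)\<close> a nonzero multiple of \<open>x\<close>.
  The last \<open>m - r\<close> rows of \<open>M + t N\<close> only involve the first \<open>s\<close> columns, where they
  contain a nonsingular \<open>s\<times>s\<close> minor (its leading coefficient is a nonsingular minor of
  the lower block of \<open>N\<close>), so the first \<open>s\<close> entries of \<open>\<Phi>\<close>, hence of \<open>x\<close>, vanish.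
  Transported back to \<open>S\<close>, the kernels of all matrices of maximal rank lie in a common
  hyperplane \<open>U\<close>; matrices of smaller rank have a kernel larger by at least one, so
  restricting to \<open>U\<close> keeps the space \<open>c\<close>-defective for its defectiveness index \<open>c\<close>,
  contradicting semi-primitivity.
\<close>

subsection \<open>Minors and determinants of linear polynomial matrices\<close>

definition minor :: "'b mat \<Rightarrow> nat \<Rightarrow> (nat \<Rightarrow> nat) \<Rightarrow> (nat \<Rightarrow> nat) \<Rightarrow> 'b mat" where
  "minor A k f g = mat k k (\<lambda>(i,j). A $$ (f i, g j))"

lemma minor_carrier [simp]: "minor A k f g \<in> carrier_mat k k"
  unfolding minor_def by simp

lemma minor_index [simp]: "i < k \<Longrightarrow> j < k \<Longrightarrow> minor A k f g $$ (i,j) = A $$ (f i, g j)"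
  unfolding minor_def by simp

lemma minor_dim [simp]: "dim_row (minor A k f g) = k" "dim_col (minor A k f g) = k"
  unfolding minor_def by simp_all

lemma poly_det:
  fixes A :: "'b::comm_ring_1 poly mat"
  shows "poly (det A) a = det (map_mat (\<lambda>p. poly p a) A)"
proof -
  interpret comm_ring_hom "\<lambda>p::'b::comm_ring_1 poly. poly p a"
    by unfold_locales simp_all
  show ?thesis by simp
qed

lemma coeff_degree_prod_linear:
  fixes a b :: "nat \<Rightarrow> 'b::comm_ring_1"
  shows "coeff (\<Prod>i<k. [:a i, b i:]) k = (\<Prod>i<k. b i) \<and> degree (\<Prod>i<k. [:a i, b i:]) \<le> k"
proof (induction k)
  case 0
  then show ?case by simp
next
  case (Suc k)
  let ?P = "\<Prod>i<k. [:a i, b i:]"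
  have d: "degree ?P \<le> k" using Suc by simp
  have eq: "?P * [:a k, b k:] = Polynomial.smult (a k) ?P + pCons 0 (Polynomial.smult (b k) ?P)"
    by (simp add: mult_pCons_right mult.commute)
  have "coeff (?P * [:a k, b k:]) (Suc k) = (\<Prod>i<k. b i) * b k"
    unfolding eq using Suc d by (simp add: coeff_eq_0 mult.commute)
  moreover have "degree (?P * [:a k, b k:]) \<le> Suc k"
    using degree_mult_le[of ?P "[:a k, b k:]"] d degree_pCons_le[of "a k" "[:b k:]"] by simp
  ultimately show ?case by (simp add: prod.lessThan_Suc)
qed

lemma coeff_det_linear_poly_mat:
  fixes a b :: "nat \<Rightarrow> nat \<Rightarrow> 'b::comm_ring_1"
  shows "coeff (det (mat k k (\<lambda>(i,j). [:a i j, b i j:]))) k = det (mat k k (\<lambda>(i,j). b i j))"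
proof -
  have "coeff (signof p * (\<Prod>i = 0..<k. mat k k (\<lambda>(i,j). [:a i j, b i j:]) $$ (i, p i))) k
      = signof p * (\<Prod>i = 0..<k. mat k k (\<lambda>(i,j). b i j) $$ (i, p i))"
    if p: "p permutes {0..<k}" for p
  proof -
    have pi: "i < k \<Longrightarrow> p i < k" for i using p by (simp add: permutes_in_image)
    have e1: "(\<Prod>i = 0..<k. mat k k (\<lambda>(i,j). [:a i j, b i j:]) $$ (i, p i))
        = (\<Prod>i<k. [:a i (p i), b i (p i):])"
      by (auto simp: pi atLeast0LessThan intro!: prod.cong)
    have e2: "(\<Prod>i = 0..<k. mat k k (\<lambda>(i,j). b i j) $$ (i, p i)) = (\<Prod>i<k. b i (p i))"
      by (auto simp: pi atLeast0LessThan intro!: prod.cong)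
    show ?thesis unfolding e1 e2 using coeff_degree_prod_linear[of "\<lambda>i. a i (p i)" "\<lambda>i. b i (p i)" k]
      by (auto simp: sign_def)
  qed
  then show ?thesis
    unfolding det_def'[of "mat k k (\<lambda>(i,j). [:a i j, b i j:])" k, simplified]
      det_def'[of "mat k k (\<lambda>(i,j). b i j)" k, simplified] coeff_sum
    by (intro sum.cong) auto
qed

lemma degree_det_linear_poly_mat:
  fixes a b :: "nat \<Rightarrow> nat \<Rightarrow> 'b::comm_ring_1"
  shows "degree (det (mat k k (\<lambda>(i,j). [:a i j, b i j:]))) \<le> k"
  using degree_det_le[of k "mat k k (\<lambda>(i,j). [:a i j, b i j:])" 1] by simp


lemma det_bordered:
  fixes X :: "'b::idom mat"
  assumes X: "X \<in> carrier_mat (Suc k) (Suc k)"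
    and nz: "det (mat k k (\<lambda>(i,j). X $$ (i,j))) \<noteq> 0"
  shows "det X = X $$ (k,k) * det (mat k k (\<lambda>(i,j). X $$ (i,j)))
     - vec k (\<lambda>j. X $$ (k,j)) \<bullet> (adj_mat (mat k k (\<lambda>(i,j). X $$ (i,j))) *\<^sub>v vec k (\<lambda>i. X $$ (i,k)))"
proof -
  define A0 where "A0 = mat k k (\<lambda>(i,j). X $$ (i,j))"
  define a where "a = vec k (\<lambda>i. X $$ (i,k))"
  define \<beta> where "\<beta> = vec k (\<lambda>j. X $$ (k,j))"
  define d where "d = X $$ (k,k)"
  define \<delta> where "\<delta> = det A0"
  define w where "w = adj_mat A0 *\<^sub>v a"
  define e where "e = d * \<delta> - \<beta> \<bullet> w"
  have A0: "A0 \<in> carrier_mat k k" unfolding A0_def by simp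
  have adj: "adj_mat A0 \<in> carrier_mat k k" using adj_mat[OF A0] by simp
  have a: "a \<in> carrier_vec k" unfolding a_def by simp
  have w: "w \<in> carrier_vec k" unfolding w_def using adj a by simp
  define Ca where "Ca = mat k 1 (\<lambda>(i,_). a $ i)"
  define Rb where "Rb = mat 1 k (\<lambda>(_,j). \<beta> $ j)"
  define Dd where "Dd = mat 1 1 (\<lambda>_. d)"
  define Cw where "Cw = mat k 1 (\<lambda>(i,_). - w $ i)"
  define Dl where "Dl = mat 1 1 (\<lambda>_. \<delta>)"
  define De where "De = mat 1 1 (\<lambda>_. e)"
  have Xeq: "X = four_block_mat A0 Ca Rb Dd"
    by (rule eq_matI, insert X, auto simp: A0_def Ca_def Rb_def Dd_def a_def \<beta>_def d_def
        index_mat_four_block less_Suc_eq)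
  \<comment> \<open>Multiplying by \<open>R = [[I, -adj(A\<^sub>0) a], [0, det A\<^sub>0]]\<close> clears the last column above the
    diagonal and leaves \<open>e\<close> in the corner.\<close>
  define R where "R = four_block_mat (1\<^sub>m k) Cw (0\<^sub>m 1 k) Dl"
  have R: "R \<in> carrier_mat (k+1) (k+1)" unfolding R_def Cw_def Dl_def by auto
  have detR: "det R = \<delta>" unfolding R_def
    by (subst det_four_block_mat_lower_left_zero[of _ k _ 1], auto simp: Cw_def Dl_def det_single)
  have aw: "A0 *\<^sub>v w = \<delta> \<cdot>\<^sub>v a"
  proof -
    have "A0 *\<^sub>v w = (A0 * adj_mat A0) *\<^sub>v a" unfolding w_def using A0 adj a
      by (simp add: assoc_mult_mat_vec)
    also have "\<dots> = (\<delta> \<cdot>\<^sub>m 1\<^sub>m k) *\<^sub>v a" using adj_mat(2)[OF A0] \<delta>_def by simp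
    also have "\<dots> = \<delta> \<cdot>\<^sub>v a" using a by auto
    finally show ?thesis .
  qed
  have blk1: "A0 * Cw + Ca * Dl = 0\<^sub>m k 1"
  proof (rule eq_matI)
    fix i j assume ij: "i < dim_row (0\<^sub>m k 1 :: 'b mat)" "j < dim_col (0\<^sub>m k 1 :: 'b mat)"
    hence i: "i < k" and j: "j = 0" by auto
    have "(A0 * Cw) $$ (i,j) = row A0 i \<bullet> col Cw 0" using i j A0 unfolding Cw_def by simp
    also have "col Cw 0 = - w" unfolding Cw_def using w by (auto simp: col_def)
    also have "row A0 i \<bullet> (- w) = - (row A0 i \<bullet> w)" using w A0 i by simp
    also have "row A0 i \<bullet> w = (A0 *\<^sub>v w) $ i" using A0 i by simp
    also have "\<dots> = \<delta> * a $ i" unfolding aw using a i by simp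
    finally have 1: "(A0 * Cw) $$ (i,j) = - (\<delta> * a $ i)" .
    have 2: "(Ca * Dl) $$ (i,j) = a $ i * \<delta>" using i j unfolding Ca_def Dl_def
      by (simp add: scalar_prod_def row_def col_def)
    show "(A0 * Cw + Ca * Dl) $$ (i,j) = 0\<^sub>m k 1 $$ (i,j)"
      using 1 2 i j A0 unfolding Cw_def Ca_def Dl_def by (simp add: mult.commute)
  qed (auto simp: Cw_def Ca_def Dl_def)
  have blk2: "Rb * Cw + Dd * Dl = De"
  proof (rule eq_matI)
    fix i j assume ij: "i < dim_row De" "j < dim_col De"
    hence i: "i = 0" and j: "j = 0" by (auto simp: De_def)
    have "(Rb * Cw) $$ (0,0) = \<beta> \<bullet> (- w)" unfolding Rb_def Cw_def
      using w by (auto simp: scalar_prod_def row_def col_def intro!: sum.cong)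
    also have "\<dots> = - (\<beta> \<bullet> w)" using w by (simp add: \<beta>_def)
    finally show "(Rb * Cw + Dd * Dl) $$ (i,j) = De $$ (i,j)" using i j
      unfolding De_def Dd_def Dl_def Rb_def Cw_def e_def
      by (simp add: scalar_prod_def row_def col_def)
  qed (auto simp: De_def Rb_def Dd_def Cw_def Dl_def)
  have prod: "X * R = four_block_mat A0 (0\<^sub>m k 1) Rb De"
    unfolding Xeq R_def
    apply (subst mult_four_block_mat[of _ k k _ 1 _ 1 _ _ k _ 1])
    using A0 blk1 blk2 by (auto simp: Ca_def Rb_def Dd_def Cw_def Dl_def)
  have "det (X * R) = \<delta> * e"
    unfolding prod
    by (subst det_four_block_mat_upper_right_zero[of _ k _ 1], insert A0,
        auto simp: Rb_def De_def det_single \<delta>_def)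
  moreover have "det (X * R) = det X * \<delta>" using det_mult[OF X, of R] R detR by simp
  ultimately have "det X * \<delta> = e * \<delta>" by (simp add: mult.commute)
  hence "det X = e" using nz unfolding \<delta>_def A0_def by simp
  thus ?thesis unfolding e_def d_def \<delta>_def A0_def \<beta>_def w_def a_def by simp
qed

lemma det_minor_bordered:
  fixes Y :: "'b::idom mat"
  assumes nz: "det (minor Y k f g) \<noteq> 0"
  shows "det (minor Y (Suc k) (f(k:=i)) (g(k:=j))) = Y $$ (i,j) * det (minor Y k f g)
     - vec k (\<lambda>l. Y $$ (i, g l)) \<bullet> (adj_mat (minor Y k f g) *\<^sub>v vec k (\<lambda>l. Y $$ (f l, j)))"
proof -
  define X where "X = minor Y (Suc k) (f(k:=i)) (g(k:=j))"
  have X: "X \<in> carrier_mat (Suc k) (Suc k)" unfolding X_def by simp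
  have sub: "mat k k (\<lambda>(a,b). X $$ (a,b)) = minor Y k f g"
  proof (rule eq_matI)
    fix a b assume "a < dim_row (minor Y k f g)" "b < dim_col (minor Y k f g)"
    hence ab: "a < k" "b < k" by auto
    thus "mat k k (\<lambda>(a,b). X $$ (a,b)) $$ (a,b) = minor Y k f g $$ (a,b)"
      unfolding X_def by simp
  qed auto
  have v1: "vec k (\<lambda>b. X $$ (k,b)) = vec k (\<lambda>l. Y $$ (i, g l))"
    unfolding X_def by (intro eq_vecI) auto
  have v2: "vec k (\<lambda>a. X $$ (a,k)) = vec k (\<lambda>l. Y $$ (f l, j))"
    unfolding X_def by (intro eq_vecI) auto
  have xk: "X $$ (k,k) = Y $$ (i,j)" unfolding X_def by simp
  have "det X = X $$ (k,k) * det (mat k k (\<lambda>(i,j). X $$ (i,j)))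
     - vec k (\<lambda>j. X $$ (k,j)) \<bullet> (adj_mat (mat k k (\<lambda>(i,j). X $$ (i,j))) *\<^sub>v vec k (\<lambda>i. X $$ (i,k)))"
    by (rule det_bordered[OF X], unfold sub, rule nz)
  also have "\<dots> = Y $$ (i,j) * det (minor Y k f g)
     - vec k (\<lambda>l. Y $$ (i, g l)) \<bullet> (adj_mat (minor Y k f g) *\<^sub>v vec k (\<lambda>l. Y $$ (f l, j)))"
    unfolding sub v1 v2 xk ..
  finally show ?thesis unfolding X_def .
qed

subsection \<open>Rank, kernels and hyperplanes\<close>

lemma mult_mat_vec_in_span_cols:
  fixes A :: "'a::field mat"
  assumes A: "A \<in> carrier_mat m n" and v: "v \<in> carrier_vec n"
  shows "A *\<^sub>v v \<in> LinearCombinations.module.span class_ring (module_vec TYPE('a) m) (set (cols A))"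
proof -
  interpret W: vec_space "TYPE('a)" m .
  have cs: "set (cols A) \<subseteq> carrier_vec m" using A cols_dim by blast
  have "W.lincomb_list (\<lambda>i. v $ i) (cols A) = mat_of_cols m (cols A) *\<^sub>v vec (length (cols A)) (\<lambda>i. v $ i)"
    by (rule W.lincomb_list_as_mat_mult, insert cs, auto)
  also have "mat_of_cols m (cols A) = A" using A mat_of_cols_cols[of A] by simp
  also have "vec (length (cols A)) (\<lambda>i. v $ i) = v" using A v by auto
  finally have "A *\<^sub>v v = W.lincomb_list (\<lambda>i. v $ i) (cols A)" by simp
  hence "A *\<^sub>v v \<in> W.span_list (cols A)" unfolding W.span_list_def by auto
  thus ?thesis using W.span_list_as_span[OF cs] by simp
qed

lemma linear_map_mult_mat_vec:
  fixes A :: "'a::field mat"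
  assumes A: "A \<in> carrier_mat m n"
  shows "linear_map class_ring (module_vec TYPE('a) n) (module_vec TYPE('a) m) (\<lambda>v. A *\<^sub>v v)"
proof -
  have "(\<lambda>v. A *\<^sub>v v) \<in> LinearCombinations.module_hom class_ring (module_vec TYPE('a) n) (module_vec TYPE('a) m)"
    unfolding LinearCombinations.module_hom_def using A
    by (simp add: module_vec_simps class_ring_simps mult_add_distrib_mat_vec mult_mat_vec)
  thus ?thesis
    unfolding linear_map_def mod_hom_def mod_hom_axioms_def
    using vec_vs[of n, where 'a='a] vec_vs[of m, where 'a='a] by (simp add: vectorspace_def)
qed

lemma mrank_plus_kernel_dim:
  fixes A :: "'a::field mat"
  assumes A: "A \<in> carrier_mat m n"
  shows "mrank A + subdim n (mat_kernel A) = n"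
proof -
  interpret V: vec_space "TYPE('a)" n .
  interpret W: vec_space "TYPE('a)" m .
  interpret T: linear_map class_ring "module_vec TYPE('a) n" "module_vec TYPE('a) m" "\<lambda>v. A *\<^sub>v v"
    by (rule linear_map_mult_mat_vec[OF A])
  have im: "T.imT = W.span (set (cols A))"
  proof
    have imd: "T.imT = (\<lambda>v. A *\<^sub>v v) ` carrier_vec n"
      unfolding T.im_def by (simp add: module_vec_simps)
    show "T.imT \<subseteq> W.span (set (cols A))"
      unfolding imd using mult_mat_vec_in_span_cols[OF A] by blast
    show "W.span (set (cols A)) \<subseteq> T.imT"
    proof (rule W.span_is_subset)
      show "set (cols A) \<subseteq> T.imT"
      proof
        fix c assume "c \<in> set (cols A)"
        then obtain j where j: "j < n" "c = col A j" using A by (auto simp: in_set_conv_nth)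
        have "A *\<^sub>v unit_vec n j = col A j" using A j by auto
        thus "c \<in> T.imT" unfolding imd using j unit_vec_carrier[of n j] by (metis image_eqI)
      qed
      show "submodule class_ring T.imT (module_vec TYPE('a) m)"
        using T.imT_is_subspace unfolding subspace_def by simp
    qed
  qed
  have ker: "T.kerT = mat_kernel A"
    unfolding T.ker_def mat_kernel[OF A] by (simp add: module_vec_simps)
  have rn: "vectorspace.dim class_ring (module_vec TYPE('a) m\<lparr>carrier := T.imT\<rparr>) +
        vectorspace.dim class_ring (module_vec TYPE('a) n\<lparr>carrier := T.kerT\<rparr>) = V.dim"
    by (rule T.rank_nullity, simp)
  have "mrank A = vectorspace.dim class_ring (module_vec TYPE('a) m\<lparr>carrier := T.imT\<rparr>)"
    unfolding mrank_def im using A by (simp add: W.rank_def)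
  moreover have "subdim n (mat_kernel A) = vectorspace.dim class_ring (module_vec TYPE('a) n\<lparr>carrier := T.kerT\<rparr>)"
    unfolding subdim_def ker ..
  ultimately show ?thesis using rn V.dim_is_n by simp
qed

lemma subspace_mat_kernel:
  fixes A :: "'a::field mat"
  assumes A: "A \<in> carrier_mat m n"
  shows "subspace class_ring (mat_kernel A) (module_vec TYPE('a) n)"
proof -
  interpret T: linear_map class_ring "module_vec TYPE('a) n" "module_vec TYPE('a) m" "\<lambda>v. A *\<^sub>v v"
    by (rule linear_map_mult_mat_vec[OF A])
  have ker: "T.kerT = mat_kernel A"
    unfolding T.ker_def mat_kernel[OF A] by (simp add: module_vec_simps)
  show ?thesis using T.kerT_is_subspace unfolding ker .
qed

lemma minor_columns_injective:
  fixes A :: "'a::field mat"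
  assumes A: "A \<in> carrier_mat m n" and f: "\<forall>l<k. f l < m" and g: "\<forall>l<k. g l < n"
    and d: "det (minor A k f g) \<noteq> 0"
    and v: "v \<in> carrier_vec k" and Cv: "mat m k (\<lambda>(i,l). A $$ (i, g l)) *\<^sub>v v = 0\<^sub>v m"
  shows "v = 0\<^sub>v k"
proof (rule ccontr)
  assume nz: "v \<noteq> 0\<^sub>v k"
  have "minor A k f g *\<^sub>v v = 0\<^sub>v k"
  proof (rule eq_vecI)
    fix l assume "l < dim_vec (0\<^sub>v k :: 'a vec)"
    hence l: "l < k" by simp
    have "(minor A k f g *\<^sub>v v) $ l = (mat m k (\<lambda>(i,l). A $$ (i, g l)) *\<^sub>v v) $ (f l)"
      using l f v by (simp add: scalar_prod_def row_def minor_def)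
    also have "\<dots> = 0" using Cv f l by (metis index_zero_vec(1))
    finally show "(minor A k f g *\<^sub>v v) $ l = 0\<^sub>v k $ l" using l by simp
  qed simp
  hence "det (minor A k f g) = 0"
    using det_0_iff_vec_prod_zero_field[OF minor_carrier[of A k f g]] v nz by blast
  thus False using d by simp
qed

lemma mrank_ge_nonzero_minor:
  fixes A :: "'a::field mat"
  assumes A: "A \<in> carrier_mat m n" and f: "\<forall>l<k. f l < m" and g: "\<forall>l<k. g l < n"
    and d: "det (minor A k f g) \<noteq> 0"
  shows "k \<le> mrank A"
proof -
  interpret W: vec_space "TYPE('a)" m .
  define C where "C = mat m k (\<lambda>(i,l). A $$ (i, g l))"
  have C: "C \<in> carrier_mat m k" unfolding C_def by simp
  have inj: "v \<in> carrier_vec k \<Longrightarrow> C *\<^sub>v v = 0\<^sub>v m \<Longrightarrow> v = 0\<^sub>v k" for v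
    using minor_columns_injective[OF A f g d] unfolding C_def by blast
  have colC: "l < k \<Longrightarrow> col C l = col A (g l)" for l
    unfolding C_def using A g by (auto simp: col_def)
  have dist: "distinct (cols C)"
  proof (rule ccontr)
    assume "\<not> distinct (cols C)"
    then obtain a b where ab: "a < k" "b < k" "a \<noteq> b" "cols C ! a = cols C ! b"
      using C by (auto simp: distinct_conv_nth)
    hence eq: "col C a = col C b" using C by simp
    define v :: "'a vec" where "v = unit_vec k a - unit_vec k b"
    have v: "v \<in> carrier_vec k" unfolding v_def by simp
    have "v $ a = 1" unfolding v_def using ab by (simp add: unit_vec_def)
    hence "v \<noteq> 0\<^sub>v k" using ab by auto
    moreover have "C *\<^sub>v v = 0\<^sub>v m"
    proof -
      have "C *\<^sub>v v = C *\<^sub>v unit_vec k a - C *\<^sub>v unit_vec k b"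
        unfolding v_def using C by (simp add: mult_minus_distrib_mat_vec)
      also have "C *\<^sub>v unit_vec k a = col C a" using C ab(1) by auto
      also have "C *\<^sub>v unit_vec k b = col C b" using C ab(2) by auto
      finally show ?thesis using eq C ab by auto
    qed
    ultimately show False using inj v by blast
  qed
  have indpt: "W.lin_indpt (set (cols C))"
  proof
    assume "W.lin_dep (set (cols C))"
    then obtain v where "v \<in> carrier_vec k" "v \<noteq> 0\<^sub>v k" "C *\<^sub>v v = 0\<^sub>v m"
      using W.lin_depE[OF C _ dist] by blast
    thus False using inj by blast
  qed
  have sub: "set (cols C) \<subseteq> set (cols A)"
  proof
    fix c assume "c \<in> set (cols C)"
    then obtain l where l: "l < k" "c = col C l" using C by (auto simp: in_set_conv_nth)
    hence "c = col A (g l)" using colC by simp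
    moreover have "g l < length (cols A)" using g l A by simp
    ultimately show "c \<in> set (cols A)" using A by (metis cols_length cols_nth nth_mem g l carrier_matD(2))
  qed
  have "card (set (cols C)) = k" using distinct_card[OF dist] C by simp
  thus ?thesis using W.rank_ge_card_indpt[OF A sub indpt] unfolding mrank_def using A by simp
qed

lemma mat_kernel_append_row:
  fixes A :: "'a::field mat"
  assumes A: "A \<in> carrier_mat m n" and w: "w \<in> carrier_vec n"
  shows "mat_kernel (mat (Suc m) n (\<lambda>(i,j). if i < m then A $$ (i,j) else w $ j))
    = mat_kernel A \<inter> {x. w \<bullet> x = 0}"
proof -
  define X where "X = mat (Suc m) n (\<lambda>(i,j). if i < m then A $$ (i,j) else w $ j)"
  have X: "X \<in> carrier_mat (Suc m) n" unfolding X_def by simp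
  have rowX: "row X i = (if i < m then row A i else w)" if "i < Suc m" for i
    using that A w unfolding X_def by (auto intro!: eq_vecI)
  have "(X *\<^sub>v x = 0\<^sub>v (Suc m)) = (A *\<^sub>v x = 0\<^sub>v m \<and> w \<bullet> x = 0)" if "x \<in> carrier_vec n" for x
  proof -
    have "(X *\<^sub>v x = 0\<^sub>v (Suc m)) = (\<forall>i<Suc m. row X i \<bullet> x = 0)"
      using X by (auto simp: vec_eq_iff)
    also have "\<dots> = ((\<forall>i<m. row A i \<bullet> x = 0) \<and> w \<bullet> x = 0)"
      using rowX by (auto simp: less_Suc_eq)
    also have "(\<forall>i<m. row A i \<bullet> x = 0) = (A *\<^sub>v x = 0\<^sub>v m)"
      using A by (auto simp: vec_eq_iff)
    finally show ?thesis .
  qed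
  then show ?thesis using mat_kernel[OF X] mat_kernel[OF A] unfolding X_def by auto
qed

lemma kernel_dim_le_Int_hyperplane:
  fixes A :: "'a::field mat"
  assumes A: "A \<in> carrier_mat m n" and l: "ll \<in> carrier_vec n"
  shows "subdim n (mat_kernel A) \<le> subdim n (mat_kernel A \<inter> {x. ll \<bullet> x = 0}) + 1"
proof -
  interpret W: vec_space "TYPE('a)" "Suc m" .
  define St where "St = mat (Suc m) n (\<lambda>(i,j). if i < m then A $$ (i,j) else ll $ j)"
  define X1 where "X1 = mat (Suc m) n (\<lambda>(i,j). if i < m then A $$ (i,j) else 0\<^sub>v n $ j)"
  define X2 where "X2 = mat (Suc m) n (\<lambda>(i,j). if i < m then 0 else ll $ j)"
  have St: "St \<in> carrier_mat (Suc m) n" and X1: "X1 \<in> carrier_mat (Suc m) n"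
    and X2: "X2 \<in> carrier_mat (Suc m) n" unfolding St_def X1_def X2_def by auto
  have "St = X1 + X2" unfolding St_def X1_def X2_def by (rule eq_matI) auto
  moreover have "W.rank X2 \<le> 1"
    by (rule W.rank_le_1_product_entries[OF X2, of "\<lambda>r. if r < m then 0 else 1" "\<lambda>c. ll $ c"])
      (auto simp: X2_def)
  ultimately have "mrank St \<le> mrank X1 + 1"
    using W.rank_subadditive[OF X1 X2] St X1 X2 unfolding mrank_def by simp
  moreover have kX1: "mat_kernel X1 = mat_kernel A"
    using mat_kernel_append_row[OF A zero_carrier_vec] mat_kernel_carrier[OF A]
    unfolding X1_def by auto
  moreover have kSt: "mat_kernel St = mat_kernel A \<inter> {x. ll \<bullet> x = 0}"
    unfolding St_def by (rule mat_kernel_append_row[OF A l])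
  ultimately show ?thesis
    using mrank_plus_kernel_dim[OF St, unfolded kSt] mrank_plus_kernel_dim[OF X1, unfolded kX1]
      mrank_plus_kernel_dim[OF A]
    by linarith
qed

lemma lin_hyperplane_orthogonal:
  fixes ll :: "'a::field vec"
  assumes l: "ll \<in> carrier_vec n" and nz: "ll \<noteq> 0\<^sub>v n"
  shows "lin_hyperplane n {x \<in> carrier_vec n. ll \<bullet> x = 0}"
proof -
  obtain j0 where j0: "j0 < n" "ll $ j0 \<noteq> 0" using l nz by (auto simp: vec_eq_iff)
  interpret W: vec_space "TYPE('a)" 1 .
  define L where "L = mat 1 n (\<lambda>(_,j). ll $ j)"
  have L: "L \<in> carrier_mat 1 n" unfolding L_def by simp
  have rowL: "row L 0 = ll" unfolding L_def using l by (auto intro!: eq_vecI)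
  have kL: "mat_kernel L = {x \<in> carrier_vec n. ll \<bullet> x = 0}"
  proof -
    have "x \<in> carrier_vec n \<Longrightarrow> (L *\<^sub>v x = 0\<^sub>v 1) = (row L 0 \<bullet> x = 0)" for x
      using L by (auto simp: vec_eq_iff)
    hence "x \<in> carrier_vec n \<Longrightarrow> (L *\<^sub>v x = 0\<^sub>v 1) = (ll \<bullet> x = 0)" for x
      unfolding rowL by blast
    thus ?thesis using mat_kernel[OF L] by auto
  qed
  have "W.rank L \<le> 1"
    by (rule W.rank_le_1_product_entries[OF L, of "\<lambda>r. 1" "\<lambda>c. ll $ c"], auto simp: L_def)
  hence r1: "mrank L \<le> 1" unfolding mrank_def using L by simp
  have "det (minor L 1 (\<lambda>_. 0) (\<lambda>_. j0)) = ll $ j0"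
    by (subst det_single, auto simp: L_def j0)
  hence r2: "1 \<le> mrank L" using mrank_ge_nonzero_minor[OF L, of 1 "\<lambda>_. 0" "\<lambda>_. j0"] j0 by auto
  have e: "mrank L + subdim n (mat_kernel L) = n" by (rule mrank_plus_kernel_dim[OF L])
  show ?thesis unfolding lin_hyperplane_def using subspace_mat_kernel[OF L] e r1 r2 kL by auto
qed

lemma mult_mat_vec_extend:
  fixes C :: "'b::comm_ring_1 mat"
  assumes C: "C \<in> carrier_mat m (Suc k)" and v: "v \<in> carrier_vec k"
  shows "C *\<^sub>v vec (Suc k) (\<lambda>j. if j < k then v $ j else c)
    = mat m k (\<lambda>(i,j). C $$ (i,j)) *\<^sub>v v + c \<cdot>\<^sub>v col C k"
proof (rule eq_vecI)
  fix i assume "i < dim_vec (mat m k (\<lambda>(i,j). C $$ (i,j)) *\<^sub>v v + c \<cdot>\<^sub>v col C k)"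
  then have i: "i < m" using C by simp
  have "(C *\<^sub>v vec (Suc k) (\<lambda>j. if j < k then v $ j else c)) $ i
      = (\<Sum>j<Suc k. C $$ (i,j) * (if j < k then v $ j else c))"
    using C i by (simp add: scalar_prod_def row_def atLeast0LessThan)
  also have "\<dots> = (\<Sum>j<k. C $$ (i,j) * v $ j) + C $$ (i,k) * c"
    unfolding sum.lessThan_Suc by simp
  also have "\<dots> = (mat m k (\<lambda>(i,j). C $$ (i,j)) *\<^sub>v v + c \<cdot>\<^sub>v col C k) $ i"
    using C i v by (simp add: scalar_prod_def atLeast0LessThan col_def)
  finally show "(C *\<^sub>v vec (Suc k) (\<lambda>j. if j < k then v $ j else c)) $ i
      = (mat m k (\<lambda>(i,j). C $$ (i,j)) *\<^sub>v v + c \<cdot>\<^sub>v col C k) $ i" .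
qed (use C in simp)

lemma injective_mat_drop_last_col:
  fixes C :: "'a::field mat"
  assumes C: "C \<in> carrier_mat m (Suc k)"
    and inj: "\<forall>v \<in> carrier_vec (Suc k). C *\<^sub>v v = 0\<^sub>v m \<longrightarrow> v = 0\<^sub>v (Suc k)"
  shows "\<forall>v \<in> carrier_vec k. mat m k (\<lambda>(i,j). C $$ (i,j)) *\<^sub>v v = 0\<^sub>v m \<longrightarrow> v = 0\<^sub>v k"
proof (intro ballI impI)
  fix v :: "'a vec" assume v: "v \<in> carrier_vec k" and Cv: "mat m k (\<lambda>(i,j). C $$ (i,j)) *\<^sub>v v = 0\<^sub>v m"
  define u where "u = vec (Suc k) (\<lambda>j. if j < k then v $ j else 0)"
  have "0 \<cdot>\<^sub>v col C k = 0\<^sub>v m" using C by (intro eq_vecI) auto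
  then have "C *\<^sub>v u = 0\<^sub>v m"
    unfolding u_def mult_mat_vec_extend[OF C v] Cv by simp
  then have "u = 0\<^sub>v (Suc k)" using inj unfolding u_def by simp
  then have "u $ j = 0" if "j < k" for j using that by simp
  then show "v = 0\<^sub>v k" using v unfolding u_def by (intro eq_vecI) auto
qed

lemma injective_mat_nonzero_row_minor:
  fixes C :: "'a::field mat"
  assumes "C \<in> carrier_mat m k" "\<forall>v \<in> carrier_vec k. C *\<^sub>v v = 0\<^sub>v m \<longrightarrow> v = 0\<^sub>v k"
  shows "\<exists>f. (\<forall>l<k. f l < m) \<and> det (minor C k f id) \<noteq> 0"
  using assms
proof (induction k arbitrary: C)
  case 0
  have "det (minor C 0 id id) = 1" by (rule det_dim_zero, simp)
  then show ?case by auto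
next
  case (Suc k)
  note C = Suc.prems(1) and inj = Suc.prems(2)
  define C' where "C' = mat m k (\<lambda>(i,j). C $$ (i,j))"
  have "C' \<in> carrier_mat m k" unfolding C'_def by simp
  from Suc.IH[OF this injective_mat_drop_last_col[OF C inj, folded C'_def]]
  obtain f where f: "\<forall>l<k. f l < m" and d: "det (minor C' k f id) \<noteq> 0" by blast
  define \<delta> where "\<delta> = det (minor C k f id)"
  have "minor C' k f id = minor C k f id" unfolding C'_def using f by (auto intro!: eq_matI)
  then have d\<delta>: "\<delta> \<noteq> 0" using d unfolding \<delta>_def by simp
  \<comment> \<open>If every bordering of this minor were singular, the adjugate would produce a
    nonzero kernel vector of \<open>C\<close>.\<close>
  show ?case
  proof (rule ccontr)
    assume "\<not> ?case"
    then have all0: "\<forall>i<m. det (minor C (Suc k) (f(k:=i)) id) = 0"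
      using f by (metis fun_upd_apply less_SucE)
    define w where "w = adj_mat (minor C k f id) *\<^sub>v vec k (\<lambda>l. C $$ (f l, k))"
    have w: "w \<in> carrier_vec k" unfolding w_def using adj_mat(1)[of "minor C k f id" k] by simp
    have eqs: "C $$ (i,k) * \<delta> = vec k (\<lambda>l. C $$ (i, l)) \<bullet> w" if i: "i < m" for i
    proof -
      have "(id(k:=k)) = (id :: nat \<Rightarrow> nat)" by auto
      then show ?thesis
        using det_minor_bordered[of C k f id i k] d\<delta> all0 i unfolding \<delta>_def w_def by simp
    qed
    define v where "v = vec (Suc k) (\<lambda>j. if j < k then w $ j else - \<delta>)"
    have "C *\<^sub>v v = C' *\<^sub>v w + (- \<delta>) \<cdot>\<^sub>v col C k"
      unfolding v_def C'_def by (rule mult_mat_vec_extend[OF C w])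
    also have "\<dots> = 0\<^sub>v m"
    proof (rule eq_vecI)
      fix i assume "i < dim_vec (0\<^sub>v m :: 'a vec)"
      then have i: "i < m" by simp
      have "(C' *\<^sub>v w) $ i = vec k (\<lambda>l. C $$ (i, l)) \<bullet> w"
        using w i by (simp add: C'_def scalar_prod_def row_def)
      then show "(C' *\<^sub>v w + (- \<delta>) \<cdot>\<^sub>v col C k) $ i = 0\<^sub>v m $ i"
        using eqs[OF i] i C w by (simp add: C'_def col_def mult.commute)
    qed (use C w in \<open>auto simp: C'_def\<close>)
    finally have "v = 0\<^sub>v (Suc k)" using inj unfolding v_def by auto
    then have "v $ k = 0" by simp
    then show False using d\<delta> unfolding v_def by simp
  qed
qed

lemma exists_maximal_lin_indpt_cols:
  fixes A :: "'a::field mat"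
  shows "\<exists>S. maximal S (\<lambda>T. T \<subseteq> set (cols A) \<and> \<not> module.lin_dep class_ring (module_vec TYPE('a) m) T)"
proof -
  interpret W: vec_space "TYPE('a)" m .
  show ?thesis
    using maximal_exists[of "(\<lambda>T. T \<subseteq> set (cols A) \<and> W.lin_indpt T)" "card (set (cols A))" "{}"]
    by (meson List.finite_set card_mono empty_iff empty_subsetI W.finite_lin_indpt2 rev_finite_subset)
qed

lemma full_column_rank_injective:
  fixes A :: "'a::field mat"
  assumes A: "A \<in> carrier_mat m k" and r: "mrank A = k"
  shows "\<forall>v \<in> carrier_vec k. A *\<^sub>v v = 0\<^sub>v m \<longrightarrow> v = 0\<^sub>v k"
proof -
  interpret W: vec_space "TYPE('a)" m .
  have rk: "W.rank A = k" using r A unfolding mrank_def by simp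
  have dist: "distinct (cols A)"
  proof (rule ccontr)
    assume nd: "\<not> distinct (cols A)"
    obtain S where S: "maximal S (\<lambda>T. T \<subseteq> set (cols A) \<and> W.lin_indpt T)"
      using exists_maximal_lin_indpt_cols[of A m] by blast
    then have "card S \<le> card (set (cols A))" by (simp add: card_mono maximal_def)
    also have "card (set (cols A)) < length (cols A)"
      using nd card_length[of "cols A"] distinct_card[of "cols A"] by (metis card_distinct le_neq_implies_less)
    also have "length (cols A) = k" using A by simp
    finally have "card S < k" .
    thus False using W.rank_card_indpt[OF A S] rk by simp
  qed
  have indpt: "W.lin_indpt (set (cols A))" by (rule W.full_rank_lin_indpt[OF A rk dist])
  show ?thesis
  proof (intro ballI impI)
    fix v :: "'a vec" assume v: "v \<in> carrier_vec k" and Av: "A *\<^sub>v v = 0\<^sub>v m"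
    show "v = 0\<^sub>v k"
    proof (rule ccontr)
      assume "v \<noteq> 0\<^sub>v k"
      from W.lin_depI[OF A v this Av dist] indpt show False by simp
    qed
  qed
qed

lemma exists_nonzero_minor_mrank:
  fixes A :: "'a::field mat"
  assumes A: "A \<in> carrier_mat m n"
  shows "\<exists>f g. (\<forall>l<mrank A. f l < m) \<and> (\<forall>l<mrank A. g l < n) \<and> det (minor A (mrank A) f g) \<noteq> 0"
proof -
  interpret W: vec_space "TYPE('a)" m .
  obtain S where S: "maximal S (\<lambda>T. T \<subseteq> set (cols A) \<and> W.lin_indpt T)"
    using exists_maximal_lin_indpt_cols[of A m] by blast
  have SA: "S \<subseteq> set (cols A)" and Si: "W.lin_indpt S" using S unfolding maximal_def by auto
  have fS: "finite S" using SA finite_subset by blast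
  define r where "r = mrank A"
  have rS: "r = card S" unfolding r_def mrank_def using W.rank_card_indpt[OF A S] A by simp
  obtain h where h: "bij_betw h {0..<card S} S" using ex_bij_betw_nat_finite[OF fS] by blast
  have hS: "l < r \<Longrightarrow> h l \<in> S" for l using h rS unfolding bij_betw_def by auto
  define g where "g l = (SOME j. j < n \<and> col A j = h l)" for l
  have g: "l < r \<Longrightarrow> g l < n \<and> col A (g l) = h l" for l
  proof -
    assume l: "l < r"
    have "h l \<in> set (cols A)" using hS[OF l] SA by auto
    then obtain j where "j < n" "col A j = h l" using A by (auto simp: in_set_conv_nth)
    hence "\<exists>j. j < n \<and> col A j = h l" by blast
    thus ?thesis unfolding g_def by (rule someI_ex)
  qed
  define C where "C = mat m r (\<lambda>(i,l). A $$ (i, g l))"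
  have C: "C \<in> carrier_mat m r" unfolding C_def by simp
  have colC: "l < r \<Longrightarrow> col C l = h l" for l
  proof -
    assume l: "l < r"
    have "col C l = col A (g l)" unfolding C_def using A l conjunct1[OF g[OF l]] by (intro eq_vecI) auto
    thus ?thesis using g[OF l] by simp
  qed
  have colsC: "cols C = map h [0..<r]"
    by (rule nth_equalityI, insert C colC, auto)
  have dist: "distinct (cols C)" unfolding colsC distinct_map
    using h rS unfolding bij_betw_def by auto
  have setC: "set (cols C) = S" unfolding colsC using h rS unfolding bij_betw_def by auto
  have inj: "\<forall>v \<in> carrier_vec r. C *\<^sub>v v = 0\<^sub>v m \<longrightarrow> v = 0\<^sub>v r"
  proof (intro ballI impI)
    fix v :: "'a vec" assume v: "v \<in> carrier_vec r" and Cv: "C *\<^sub>v v = 0\<^sub>v m"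
    show "v = 0\<^sub>v r"
    proof (rule ccontr)
      assume "v \<noteq> 0\<^sub>v r"
      from W.lin_depI[OF C v this Cv dist] Si setC show False by simp
    qed
  qed
  obtain f where f: "\<forall>l<r. f l < m" and d: "det (minor C r f id) \<noteq> 0"
    using injective_mat_nonzero_row_minor[OF C inj] by blast
  have "minor C r f id = minor A r f g" unfolding C_def using f
    by (intro eq_matI) auto
  thus ?thesis using f d g unfolding r_def[symmetric] by metis
qed

lemma mrank_le_dim_col:
  fixes A :: "'a::field mat"
  assumes A: "A \<in> carrier_mat m n"
  shows "mrank A \<le> n"
  using mrank_plus_kernel_dim[OF A] by linarith

lemma invertible_mat_obtain_inverse:
  fixes Q :: "'a::field mat"
  assumes Q: "Q \<in> carrier_mat n n" and iQ: "invertible_mat Q"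
  obtains B where "B \<in> carrier_mat n n" "Q * B = 1\<^sub>m n" "B * Q = 1\<^sub>m n"
proof -
  obtain B where B: "Q * B = 1\<^sub>m n" "B * Q = 1\<^sub>m (dim_row B)"
    using iQ Q unfolding invertible_mat_def inverts_mat_def by auto
  have Bc: "B \<in> carrier_mat n n"
  proof -
    have "dim_col B = n" using arg_cong[OF B(1), of dim_col] by simp
    moreover have "dim_row B = n" using arg_cong[OF B(2), of dim_col] Q by simp
    ultimately show ?thesis by auto
  qed
  show ?thesis using that[OF Bc B(1)] B(2) Bc by simp
qed

lemma mrank_mult_invertible:
  fixes A :: "'a::field mat"
  assumes A: "A \<in> carrier_mat m n" and P: "P \<in> carrier_mat m m" and iP: "invertible_mat P"
    and Q: "Q \<in> carrier_mat n n" and iQ: "invertible_mat Q"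
  shows "mrank (P * A * Q) = mrank A"
proof -
  obtain P' where P': "P' \<in> carrier_mat m m" "P' * P = 1\<^sub>m m"
    using invertible_mat_obtain_inverse[OF P iP] by metis
  obtain Q' where Q': "Q' \<in> carrier_mat n n" "Q * Q' = 1\<^sub>m n"
    using invertible_mat_obtain_inverse[OF Q iQ] by metis
  have PA: "P * A \<in> carrier_mat m n" using P A by simp
  have "kernel.dim n (P * A * Q) = kernel.dim n (P * A)"
    by (rule mat_kernel_dim_mult_eq_right[OF PA Q Q'])
  then have "subdim n (mat_kernel (P * A * Q)) = subdim n (mat_kernel A)"
    unfolding subdim_def mat_kernel_mult_eq[OF A P P'(1) P'(2)] using A P Q
    by (simp add: kernel.intro)
  moreover have "mrank (P * A * Q) + subdim n (mat_kernel (P * A * Q)) = n"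
    using PA Q by (intro mrank_plus_kernel_dim[of _ m]) simp
  ultimately show ?thesis using mrank_plus_kernel_dim[OF A] by simp
qed

subsection \<open>Annihilating a matrix by bordering a nonsingular minor\<close>

text \<open>With \<open>A = minor X r f g\<close>, \<open>F\<close> the \<open>r\<times>m\<close> matrix selecting rows \<open>f\<close> and \<open>G\<close> the
  \<open>n\<times>r\<close> matrix placing columns at positions \<open>g\<close>, this is \<open>det A \<cdot> I - G adj(A) F X\<close>.\<close>
definition bordering_annihilator ::
    "nat \<Rightarrow> nat \<Rightarrow> nat \<Rightarrow> (nat \<Rightarrow> nat) \<Rightarrow> (nat \<Rightarrow> nat) \<Rightarrow> 'b::comm_ring_1 mat \<Rightarrow> 'b mat" where
  "bordering_annihilator m n r f g X = det (minor X r f g) \<cdot>\<^sub>m 1\<^sub>m n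
     - mat n r (\<lambda>(c,l). if c = g l then 1 else 0)
       * (adj_mat (minor X r f g) * (mat r m (\<lambda>(l,i). if i = f l then 1 else 0) * X))"

lemma bordering_annihilator_carrier:
  "X \<in> carrier_mat m n \<Longrightarrow> bordering_annihilator m n r f g X \<in> carrier_mat n n"
  unfolding bordering_annihilator_def
  using adj_mat(1)[OF minor_carrier[of X r f g]] by (intro minus_carrier_mat) auto

lemma mult_bordering_annihilator:
  fixes X :: "'b::idom mat"
  assumes X: "X \<in> carrier_mat m n" and f: "\<forall>l<r. f l < m" and g: "\<forall>l<r. g l < n"
    and nz: "det (minor X r f g) \<noteq> 0"
    and bordered: "\<And>i j. i < m \<Longrightarrow> j < n \<Longrightarrow> det (minor X (Suc r) (f(r:=i)) (g(r:=j))) = 0"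
  shows "X * bordering_annihilator m n r f g X = 0\<^sub>m m n"
proof -
  define A where "A = minor X r f g"
  define Gm where "Gm = (mat n r (\<lambda>(c,l). if c = g l then 1 else 0) :: 'b mat)"
  define Fm where "Fm = (mat r m (\<lambda>(l,i). if i = f l then 1 else 0) :: 'b mat)"
  define K where "K = adj_mat A * (Fm * X)"
  have adj: "adj_mat A \<in> carrier_mat r r" using adj_mat(1)[of A r] unfolding A_def by simp
  have Gm: "Gm \<in> carrier_mat n r" and Fm: "Fm \<in> carrier_mat r m" unfolding Gm_def Fm_def by auto
  have K: "K \<in> carrier_mat r n" unfolding K_def using adj Fm X by simp
  have rowXG: "row (X * Gm) i = vec r (\<lambda>l. X $$ (i, g l))" if i: "i < m" for i
    using X i g by (intro eq_vecI) (auto simp: Gm_def scalar_prod_def if_distrib[of "\<lambda>x. _ * x"] cong: if_cong)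
  have colFX: "col (Fm * X) j = vec r (\<lambda>l. X $$ (f l, j))" if j: "j < n" for j
    using X j f by (intro eq_vecI) (auto simp: Fm_def scalar_prod_def if_distrib[of "\<lambda>x. x * _"] cong: if_cong)
  have XGK: "(X * Gm * K) $$ (i,j) = det A * X $$ (i,j)" if i: "i < m" and j: "j < n" for i j
  proof -
    have "(X * Gm * K) $$ (i,j) = row (X * Gm) i \<bullet> col K j"
      by (rule index_mult_mat(1), use X Gm K i j in auto)
    also have "col K j = adj_mat A *\<^sub>v col (Fm * X) j"
      unfolding K_def using Fm X j by (intro col_mult2[OF adj]) auto
    also have "row (X * Gm) i \<bullet> (adj_mat A *\<^sub>v col (Fm * X) j) = det A * X $$ (i,j)"
      using det_minor_bordered[OF nz, of i j] bordered[OF i j]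
      unfolding rowXG[OF i] colFX[OF j] A_def by (simp add: mult.commute)
    finally show ?thesis .
  qed
  have "X * (det A \<cdot>\<^sub>m 1\<^sub>m n - Gm * K) = X * (det A \<cdot>\<^sub>m 1\<^sub>m n) - X * (Gm * K)"
    using X Gm K by (intro mult_minus_distrib_mat) auto
  also have "\<dots> = det A \<cdot>\<^sub>m X - X * Gm * K"
    using X Gm K mult_smult_distrib[OF X, of "1\<^sub>m n" n "det A"] by (simp add: assoc_mult_mat[of _ m n])
  also have "\<dots> = 0\<^sub>m m n"
    using X Gm K XGK by (intro eq_matI) auto
  finally show ?thesis
    unfolding bordering_annihilator_def A_def[symmetric] Gm_def[symmetric] Fm_def[symmetric] K_def[symmetric] .
qed

lemma poly_0_mult_mat_vec:
  fixes X :: "'b::comm_ring_1 poly mat"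
  assumes X: "X \<in> carrier_mat a b" and u: "u \<in> carrier_vec b"
    and u0: "\<forall>j<b. poly (u $ j) 0 = 0" and i: "i < a"
  shows "poly ((X *\<^sub>v u) $ i) 0 = 0"
  using X u u0 i by (simp add: scalar_prod_def poly_sum)

text \<open>Evaluated at \<open>0\<close> on a constant vector \<open>x\<close> with \<open>X(0) x = 0\<close>, the term \<open>G adj(A) F X x\<close>
  of the annihilator vanishes.\<close>
lemma poly_0_bordering_annihilator_const:
  fixes X :: "'b::comm_ring_1 poly mat"
  assumes X: "X \<in> carrier_mat m n" and x: "x \<in> carrier_vec n"
    and ker0: "\<forall>i<m. poly ((X *\<^sub>v map_vec (\<lambda>a. [:a:]) x) $ i) 0 = 0" and c: "c < n"
  shows "poly ((bordering_annihilator m n r f g X *\<^sub>v map_vec (\<lambda>a. [:a:]) x) $ c) 0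
       = poly (det (minor X r f g)) 0 * x $ c"
proof -
  define A where "A = minor X r f g"
  define Gm where "Gm = (mat n r (\<lambda>(c,l). if c = g l then 1 else 0) :: 'b poly mat)"
  define Fm where "Fm = (mat r m (\<lambda>(l,i). if i = f l then 1 else 0) :: 'b poly mat)"
  define zx where "zx = map_vec (\<lambda>a. [:a:]) x"
  have adj: "adj_mat A \<in> carrier_mat r r" using adj_mat(1)[of A r] unfolding A_def by simp
  have Gm: "Gm \<in> carrier_mat n r" and Fm: "Fm \<in> carrier_mat r m" unfolding Gm_def Fm_def by auto
  have zx: "zx \<in> carrier_vec n" unfolding zx_def using x by simp
  have Xzx: "X *\<^sub>v zx \<in> carrier_vec m" using X zx by simp
  have "bordering_annihilator m n r f g X *\<^sub>v zx
      = (det A \<cdot>\<^sub>m 1\<^sub>m n) *\<^sub>v zx - (Gm * (adj_mat A * (Fm * X))) *\<^sub>v zx"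
    unfolding bordering_annihilator_def A_def[symmetric] Gm_def[symmetric] Fm_def[symmetric]
    using X Gm Fm adj zx by (intro minus_mult_distrib_mat_vec) auto
  also have "(Gm * (adj_mat A * (Fm * X))) *\<^sub>v zx = Gm *\<^sub>v (adj_mat A *\<^sub>v (Fm *\<^sub>v (X *\<^sub>v zx)))"
    using X Gm Fm adj zx by (simp add: assoc_mult_mat_vec[of _ n r _ n] assoc_mult_mat_vec[of _ r r _ n])
  also have "(det A \<cdot>\<^sub>m 1\<^sub>m n) *\<^sub>v zx = det A \<cdot>\<^sub>v zx"
    using zx by auto
  finally have "bordering_annihilator m n r f g X *\<^sub>v zx
      = det A \<cdot>\<^sub>v zx - Gm *\<^sub>v (adj_mat A *\<^sub>v (Fm *\<^sub>v (X *\<^sub>v zx)))" .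
  moreover have "poly ((Gm *\<^sub>v (adj_mat A *\<^sub>v (Fm *\<^sub>v (X *\<^sub>v zx)))) $ c) 0 = 0"
  proof (rule poly_0_mult_mat_vec[OF Gm _ _ c])
    have "\<forall>i<r. poly ((Fm *\<^sub>v (X *\<^sub>v zx)) $ i) 0 = 0"
      using poly_0_mult_mat_vec[OF Fm Xzx] ker0 unfolding zx_def by blast
    then show "\<forall>i<r. poly ((adj_mat A *\<^sub>v (Fm *\<^sub>v (X *\<^sub>v zx))) $ i) 0 = 0"
      using poly_0_mult_mat_vec[OF adj] Fm Xzx by simp
  qed (use adj Fm Xzx in simp)
  moreover have "dim_vec (Gm *\<^sub>v (adj_mat A *\<^sub>v (Fm *\<^sub>v (X *\<^sub>v zx)))) = n"
    unfolding Gm_def by simp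
  ultimately have "poly ((bordering_annihilator m n r f g X *\<^sub>v zx) $ c) 0 = poly (det A) 0 * x $ c"
    using zx x c unfolding zx_def by simp
  then show ?thesis unfolding zx_def A_def .
qed

subsection \<open>Pencils of matrices of bounded rank\<close>

definition pencil :: "nat \<Rightarrow> nat \<Rightarrow> 'b::comm_ring_1 mat \<Rightarrow> 'b mat \<Rightarrow> 'b poly mat" where
  "pencil m n M N = mat m n (\<lambda>(i,j). [:M $$ (i,j), N $$ (i,j):])"

lemma pencil_carrier [simp]: "pencil m n M N \<in> carrier_mat m n"
  unfolding pencil_def by simp

lemma pencil_index [simp]: "i < m \<Longrightarrow> j < n \<Longrightarrow> pencil m n M N $$ (i,j) = [:M $$ (i,j), N $$ (i,j):]"
  unfolding pencil_def by simp

lemma pencil_dim [simp]: "dim_row (pencil m n M N) = m" "dim_col (pencil m n M N) = n"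
  unfolding pencil_def by simp_all

text \<open>A nonzero \<open>(r+1)\<close>-minor of the pencil would be a polynomial of degree at most \<open>r\<close>
  (its coefficient of degree \<open>r + 1\<close> is a minor of \<open>N\<close>) vanishing on the whole field.\<close>
lemma det_pencil_minor_Suc:
  fixes M N :: "'a::field mat"
  assumes M: "M \<in> carrier_mat m n" and N: "N \<in> carrier_mat m n"
    and bound: "\<forall>a. mrank (M + a \<cdot>\<^sub>m N) \<le> r" and rN: "mrank N \<le> r"
    and fld: "infinite (UNIV :: 'a set) \<or> r < card (UNIV :: 'a set)"
    and F: "\<forall>l<Suc r. F l < m" and G: "\<forall>l<Suc r. G l < n"
  shows "det (minor (pencil m n M N) (Suc r) F G) = 0"
proof (rule ccontr)
  define k where "k = Suc r"
  define p where "p = det (minor (pencil m n M N) k F G)"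
  assume "det (minor (pencil m n M N) (Suc r) F G) \<noteq> 0"
  hence pnz: "p \<noteq> 0" unfolding p_def k_def .
  have mform: "minor (pencil m n M N) k F G = mat k k (\<lambda>(i,j). [:M $$ (F i, G j), N $$ (F i, G j):])"
    using F G unfolding k_def by (intro eq_matI) auto
  have deg: "degree p \<le> k" unfolding p_def mform by (rule degree_det_linear_poly_mat)
  have "coeff p k = det (mat k k (\<lambda>(i,j). N $$ (F i, G j)))" unfolding p_def mform by (rule coeff_det_linear_poly_mat)
  also have "\<dots> = det (minor N k F G)" unfolding minor_def ..
  also have "\<dots> = 0"
  proof (rule ccontr)
    assume "det (minor N k F G) \<noteq> 0"
    from mrank_ge_nonzero_minor[OF N _ _ this] F G rN show False unfolding k_def by fastforce
  qed
  finally have ck: "coeff p k = 0" .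
  have degr: "degree p \<le> r"
  proof (rule ccontr)
    assume "\<not> degree p \<le> r"
    hence "degree p = k" using deg unfolding k_def by simp
    hence "lead_coeff p = 0" using ck by simp
    thus False using pnz by simp
  qed
  have roots: "poly p a = 0" for a
  proof -
    have "map_mat (\<lambda>q. poly q a) (minor (pencil m n M N) k F G) = minor (M + a \<cdot>\<^sub>m N) k F G"
      using F G M N unfolding k_def by (intro eq_matI) auto
    hence "poly p a = det (minor (M + a \<cdot>\<^sub>m N) k F G)" unfolding p_def poly_det by simp
    also have "\<dots> = 0"
    proof (rule ccontr)
      assume "det (minor (M + a \<cdot>\<^sub>m N) k F G) \<noteq> 0"
      moreover have "M + a \<cdot>\<^sub>m N \<in> carrier_mat m n" using M N by simp
      ultimately have "k \<le> mrank (M + a \<cdot>\<^sub>m N)" using mrank_ge_nonzero_minor F G unfolding k_def by blast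
      thus False using bound[rule_format, of a] unfolding k_def by simp
    qed
    finally show ?thesis .
  qed
  hence U: "{x. poly p x = 0} = UNIV" by auto
  from fld show False
  proof
    assume "infinite (UNIV :: 'a set)"
    thus False using poly_roots_finite[OF pnz] U by simp
  next
    assume "r < card (UNIV :: 'a set)"
    thus False using card_poly_roots_bound[OF pnz] U degr by simp
  qed
qed

lemma pencil_kernel_lift:
  fixes M N :: "'a::field mat"
  assumes M: "M \<in> carrier_mat m n" and N: "N \<in> carrier_mat m n"
    and bound: "\<forall>a. mrank (M + a \<cdot>\<^sub>m N) \<le> r" and rN: "mrank N \<le> r" and rM: "mrank M = r"
    and fld: "infinite (UNIV :: 'a set) \<or> r < card (UNIV :: 'a set)"
    and x: "x \<in> mat_kernel M"
  obtains \<Phi> \<delta> where "\<Phi> \<in> carrier_vec n" "pencil m n M N *\<^sub>v \<Phi> = 0\<^sub>v m" "\<delta> \<noteq> 0"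
    "\<And>c. c < n \<Longrightarrow> poly (\<Phi> $ c) 0 = \<delta> * x $ c"
proof -
  obtain f g where f: "\<forall>l<r. f l < m" and g: "\<forall>l<r. g l < n" and dM: "det (minor M r f g) \<noteq> 0"
    using exists_nonzero_minor_mrank[OF M] rM by blast
  let ?X = "pencil m n M N"
  define zx where "zx = map_vec (\<lambda>a. [:a:]) x"
  have xc: "x \<in> carrier_vec n" and Mx: "M *\<^sub>v x = 0\<^sub>v m" using mat_kernelD[OF M x] by auto
  have zx: "zx \<in> carrier_vec n" unfolding zx_def using xc by simp
  have "map_mat (\<lambda>q. poly q 0) (minor ?X r f g) = minor M r f g"
    using f g M N by (intro eq_matI) auto
  then have d0: "poly (det (minor ?X r f g)) 0 = det (minor M r f g)"
    unfolding poly_det by simp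
  then have nz: "det (minor ?X r f g) \<noteq> 0" using dM by auto
  have Ac: "bordering_annihilator m n r f g ?X \<in> carrier_mat n n"
    by (rule bordering_annihilator_carrier[OF pencil_carrier])
  have annM: "?X * bordering_annihilator m n r f g ?X = 0\<^sub>m m n"
  proof (rule mult_bordering_annihilator[OF pencil_carrier f g nz])
    fix i j assume "i < m" "j < n"
    with f g show "det (minor ?X (Suc r) (f(r:=i)) (g(r:=j))) = 0"
      by (intro det_pencil_minor_Suc[OF M N bound rN fld]) (auto simp: less_Suc_eq)
  qed
  have "?X *\<^sub>v (bordering_annihilator m n r f g ?X *\<^sub>v zx) = (?X * bordering_annihilator m n r f g ?X) *\<^sub>v zx"
    using assoc_mult_mat_vec[OF pencil_carrier Ac zx] by simp
  also have "\<dots> = 0\<^sub>v m" unfolding annM using zx by (auto intro!: eq_vecI)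
  finally have ann: "?X *\<^sub>v (bordering_annihilator m n r f g ?X *\<^sub>v zx) = 0\<^sub>v m" .
  have "poly ((?X *\<^sub>v zx) $ i) 0 = (M *\<^sub>v x) $ i" if "i < m" for i
    using that M xc unfolding zx_def by (simp add: scalar_prod_def poly_sum mult.commute)
  then have ker0: "\<forall>i<m. poly ((?X *\<^sub>v map_vec (\<lambda>a. [:a:]) x) $ i) 0 = 0"
    using Mx unfolding zx_def by simp
  show thesis
  proof (rule that[OF _ ann dM])
    show "bordering_annihilator m n r f g ?X *\<^sub>v zx \<in> carrier_vec n" using Ac zx by simp
    fix c assume "c < n"
    from poly_0_bordering_annihilator_const[OF pencil_carrier xc ker0 this, where r = r and f = f and g = g]
    show "poly ((bordering_annihilator m n r f g ?X *\<^sub>v zx) $ c) 0 = det (minor M r f g) * x $ c"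
      unfolding zx_def d0 .
  qed
qed

lemma decomposed_pencil_kernel_vanishes:
  fixes M N :: "'a::field mat"
  assumes decM: "\<forall>i j. r \<le> i \<and> i < m \<and> s \<le> j \<and> j < n \<longrightarrow> M $$ (i,j) = 0"
    and decN: "\<forall>i j. r \<le> i \<and> i < m \<and> s \<le> j \<and> j < n \<longrightarrow> N $$ (i,j) = 0"
    and lowN: "mrank (mat (m - r) s (\<lambda>(i,j). N $$ (i + r, j))) = s" and sn: "s \<le> n"
    and \<Phi>: "\<Phi> \<in> carrier_vec n" and ann: "pencil m n M N *\<^sub>v \<Phi> = 0\<^sub>v m" and c: "c < s"
  shows "\<Phi> $ c = 0"
proof -
  define B where "B = mat (m - r) s (\<lambda>(i,j). N $$ (i + r, j))"
  have Bc: "B \<in> carrier_mat (m - r) s" unfolding B_def by simp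
  obtain h where h: "\<forall>l<s. h l < m - r" and dB: "det (minor B s h id) \<noteq> 0"
    using injective_mat_nonzero_row_minor[OF Bc full_column_rank_injective[OF Bc lowN[folded B_def]]]
    by blast
  define D where "D = minor (pencil m n M N) s (\<lambda>l. h l + r) id"
  have Dc: "D \<in> carrier_mat s s" unfolding D_def by simp
  have "D = mat s s (\<lambda>(i,j). [:M $$ (h i + r, j), N $$ (h i + r, j):])"
    unfolding D_def using h sn by (intro eq_matI) auto
  then have "coeff (det D) s = det (mat s s (\<lambda>(i,j). N $$ (h i + r, j)))"
    by (simp add: coeff_det_linear_poly_mat)
  also have "mat s s (\<lambda>(i,j). N $$ (h i + r, j)) = minor B s h id"
    unfolding B_def using h by (intro eq_matI) auto
  finally have dD: "det D \<noteq> 0" using dB by auto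
  define v where "v = vec s (\<lambda>c. \<Phi> $ c)"
  have v: "v \<in> carrier_vec s" unfolding v_def by simp
  have Dv: "D *\<^sub>v v = 0\<^sub>v s"
  proof (rule eq_vecI)
    fix l assume "l < dim_vec (0\<^sub>v s :: 'a poly vec)"
    then have l: "l < s" by simp
    define i where "i = h l + r"
    have i: "i < m" "r \<le> i" unfolding i_def using h l by auto
    have "(\<Sum>c = s..<n. pencil m n M N $$ (i, c) * \<Phi> $ c) = 0"
      using decM decN i by (intro sum.neutral) auto
    then have "(D *\<^sub>v v) $ l = (\<Sum>c = 0..<s. pencil m n M N $$ (i, c) * \<Phi> $ c)
        + (\<Sum>c = s..<n. pencil m n M N $$ (i, c) * \<Phi> $ c)"
      using Dc v l unfolding D_def v_def i_def by (simp add: scalar_prod_def)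
    also have "\<dots> = (\<Sum>c = 0..<n. pencil m n M N $$ (i, c) * \<Phi> $ c)"
      using sn by (intro sum.atLeastLessThan_concat) auto
    also have "\<dots> = (pencil m n M N *\<^sub>v \<Phi>) $ i"
      using \<Phi> i by (simp add: scalar_prod_def del: pencil_index)
    finally show "(D *\<^sub>v v) $ l = 0\<^sub>v s $ l" using ann i l by simp
  qed (use Dc in simp)
  have "det D \<cdot>\<^sub>v v = adj_mat D *\<^sub>v (D *\<^sub>v v)"
    using adj_mat(1,3)[OF Dc] Dc v by (auto simp flip: assoc_mult_mat_vec)
  also have "\<dots> = 0\<^sub>v s"
    unfolding Dv using adj_mat(1)[OF Dc] by (auto intro!: eq_vecI simp: scalar_prod_def)
  finally show ?thesis using c dD unfolding v_def by (metis index_smult_vec(1) index_vec index_zero_vec(1)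
        dim_vec mult_eq_0_iff)
qed

lemma max_rank_kernel_vanishes_on_decomposed_columns:
  fixes M N :: "'a::field mat"
  assumes M: "M \<in> carrier_mat m n" and N: "N \<in> carrier_mat m n"
    and bound: "\<forall>a. mrank (M + a \<cdot>\<^sub>m N) \<le> u" and rN: "mrank N \<le> u" and rM: "mrank M = u"
    and fld: "infinite (UNIV :: 'a set) \<or> u < card (UNIV :: 'a set)"
    and decM: "\<forall>i j. r \<le> i \<and> i < m \<and> s \<le> j \<and> j < n \<longrightarrow> M $$ (i,j) = 0"
    and decN: "\<forall>i j. r \<le> i \<and> i < m \<and> s \<le> j \<and> j < n \<longrightarrow> N $$ (i,j) = 0"
    and lowN: "mrank (mat (m - r) s (\<lambda>(i,j). N $$ (i + r, j))) = s" and sn: "s \<le> n"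
    and x: "x \<in> mat_kernel M" and c: "c < s"
  shows "x $ c = 0"
proof -
  obtain \<Phi> \<delta> where \<Phi>: "\<Phi> \<in> carrier_vec n" and ann: "pencil m n M N *\<^sub>v \<Phi> = 0\<^sub>v m"
    and \<delta>: "\<delta> \<noteq> 0" and \<Phi>0: "\<And>c. c < n \<Longrightarrow> poly (\<Phi> $ c) 0 = \<delta> * x $ c"
    using pencil_kernel_lift[OF M N bound rN rM fld x] by blast
  have "\<Phi> $ c = 0" by (rule decomposed_pencil_kernel_vanishes[OF decM decN lowN sn \<Phi> ann c])
  then show ?thesis using \<Phi>0[of c] c sn \<delta> by simp
qed

subsection \<open>Matrix spaces and semi-primitivity\<close>

lemma mat_subspace_carrier: "mat_subspace m n S \<Longrightarrow> M \<in> S \<Longrightarrow> M \<in> carrier_mat m n"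
  unfolding mat_subspace_def by (elim conjE) (rule subsetD)

lemma mat_subspace_zero: "mat_subspace m n S \<Longrightarrow> 0\<^sub>m m n \<in> S"
  unfolding mat_subspace_def by (elim conjE)

lemma mat_subspace_add: "mat_subspace m n S \<Longrightarrow> A \<in> S \<Longrightarrow> B \<in> S \<Longrightarrow> A + B \<in> S"
  unfolding mat_subspace_def by (elim conjE) simp

lemma mat_subspace_smult: "mat_subspace m n S \<Longrightarrow> A \<in> S \<Longrightarrow> c \<cdot>\<^sub>m A \<in> S"
  unfolding mat_subspace_def by (elim conjE) simp

lemma finite_mrank_image: "S \<subseteq> carrier_mat m n \<Longrightarrow> finite (mrank ` (S :: 'a::field mat set))"
  by (rule finite_subset[of _ "{..n}"]) (auto dest: mrank_le_dim_col)

lemma finite_mrank_image_mat_subspace: "mat_subspace m n S \<Longrightarrow> finite (mrank ` S)"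
  unfolding mat_subspace_def by (elim conjE) (rule finite_mrank_image)

lemma mrank_le_urk:
  assumes "mat_subspace m n S" "M \<in> S"
  shows "mrank M \<le> urk S"
  unfolding urk_def by (rule Max_ge) (use assms finite_mrank_image_mat_subspace in auto)

lemma urk_attained:
  assumes "mat_subspace m n S"
  obtains M where "M \<in> S" "mrank M = urk S"
proof -
  have "mrank ` S \<noteq> {}" using mat_subspace_zero[OF assms] by blast
  from Max_in[OF finite_mrank_image_mat_subspace[OF assms] this]
  obtain M where "M \<in> S" "Max (mrank ` S) = mrank M" by (rule imageE)
  then show thesis using that unfolding urk_def by simp
qed

lemma mat_subspace_equiv_image:
  fixes S :: "'a::field mat set"
  assumes S: "mat_subspace m n S" and P: "P \<in> carrier_mat m m" and Q: "Q \<in> carrier_mat n n"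
  shows "mat_subspace m n ((\<lambda>M. P * M * Q) ` S)"
proof -
  note Sc = mat_subspace_carrier[OF S]
  have add: "P * A * Q + P * B * Q = P * (A + B) * Q"
    if "A \<in> carrier_mat m n" "B \<in> carrier_mat m n" for A B
    using that P Q by (simp add: mult_add_distrib_mat add_mult_distrib_mat[of _ m n])
  have smult: "c \<cdot>\<^sub>m (P * A * Q) = P * (c \<cdot>\<^sub>m A) * Q" if "A \<in> carrier_mat m n" for A c
    using that P Q by (simp add: mult_smult_distrib mult_smult_assoc_mat[of _ m n])
  show ?thesis unfolding mat_subspace_def
  proof (intro conjI ballI allI)
    show "(\<lambda>M. P * M * Q) ` S \<subseteq> carrier_mat m n" using Sc P Q by auto
    show "0\<^sub>m m n \<in> (\<lambda>M. P * M * Q) ` S"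
      by (rule rev_image_eqI[OF mat_subspace_zero[OF S]]) (use P Q in simp)
  next
    fix A B assume "A \<in> (\<lambda>M. P * M * Q) ` S" "B \<in> (\<lambda>M. P * M * Q) ` S"
    then obtain A0 B0 where A0: "A0 \<in> S" "A = P * A0 * Q" and B0: "B0 \<in> S" "B = P * B0 * Q"
      by blast
    show "A + B \<in> (\<lambda>M. P * M * Q) ` S"
      by (rule rev_image_eqI[OF mat_subspace_add[OF S A0(1) B0(1)]])
        (simp add: A0(2) B0(2) add[OF Sc[OF A0(1)] Sc[OF B0(1)]])
  next
    fix c A assume "A \<in> (\<lambda>M. P * M * Q) ` S"
    then obtain A0 where A0: "A0 \<in> S" "A = P * A0 * Q" by blast
    show "c \<cdot>\<^sub>m A \<in> (\<lambda>M. P * M * Q) ` S"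
      by (rule rev_image_eqI[OF mat_subspace_smult[OF S A0(1)]])
        (simp add: A0(2) smult[OF Sc[OF A0(1)]])
  qed
qed

lemma urk_equiv_image:
  fixes S :: "'a::field mat set"
  assumes S: "mat_subspace m n S"
    and P: "P \<in> carrier_mat m m" "invertible_mat P" and Q: "Q \<in> carrier_mat n n" "invertible_mat Q"
  shows "urk ((\<lambda>M. P * M * Q) ` S) = urk S"
proof -
  have "mrank ` (\<lambda>M. P * M * Q) ` S = mrank ` S"
    unfolding image_image
    by (intro image_cong refl mrank_mult_invertible[OF mat_subspace_carrier[OF S] P Q])
  then show ?thesis unfolding urk_def by simp
qed

lemma mat_kernel_mult_inverse_right:
  fixes M :: "'a::field mat"
  assumes M: "M \<in> carrier_mat m n" and P: "P \<in> carrier_mat m m"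
    and Q: "Q \<in> carrier_mat n n" and Q': "Q' \<in> carrier_mat n n" "Q * Q' = 1\<^sub>m n"
    and x: "x \<in> mat_kernel M"
  shows "Q' *\<^sub>v x \<in> mat_kernel (P * M * Q)"
proof -
  have xc: "x \<in> carrier_vec n" and Mx: "M *\<^sub>v x = 0\<^sub>v m" using mat_kernelD[OF M x] by auto
  have Q'x: "Q' *\<^sub>v x \<in> carrier_vec n" using Q'(1) xc by simp
  have PM: "P * M \<in> carrier_mat m n" using P M by simp
  have QQ'x: "Q *\<^sub>v (Q' *\<^sub>v x) \<in> carrier_vec n" using Q Q'x by simp
  have "P * M * Q *\<^sub>v (Q' *\<^sub>v x) = P *\<^sub>v (M *\<^sub>v (Q *\<^sub>v (Q' *\<^sub>v x)))"
    unfolding assoc_mult_mat_vec[OF PM Q Q'x] assoc_mult_mat_vec[OF P M QQ'x] ..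
  also have "Q *\<^sub>v (Q' *\<^sub>v x) = x"
    unfolding assoc_mult_mat_vec[OF Q Q'(1) xc, symmetric] Q'(2) using xc by (rule one_mult_mat_vec)
  also have "P *\<^sub>v (M *\<^sub>v x) = 0\<^sub>v m" unfolding Mx using P by (auto intro!: eq_vecI simp: scalar_prod_def)
  finally show ?thesis using PM Q Q'x by (intro mat_kernelI) auto
qed

lemma mat_subspace_decomposed_kernel_vanishes:
  fixes S :: "'a::field mat set"
  assumes S: "mat_subspace m n S"
    and fld: "infinite (UNIV :: 'a set) \<or> urk S < card (UNIV :: 'a set)"
    and dec: "rs_decomposed m n r s S" and sn: "s \<le> n"
    and N: "N \<in> S" and lowN: "mrank (mat (m - r) s (\<lambda>(i,j). N $$ (i + r, j))) = s"
    and M: "M \<in> S" "mrank M = urk S" and x: "x \<in> mat_kernel M" and c: "c < s"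
  shows "x $ c = 0"
proof (rule max_rank_kernel_vanishes_on_decomposed_columns[OF _ _ _ _ M(2) fld _ _ lowN sn x c])
  show "M \<in> carrier_mat m n" "N \<in> carrier_mat m n" using mat_subspace_carrier[OF S] M N by auto
  show "\<forall>a. mrank (M + a \<cdot>\<^sub>m N) \<le> urk S"
    using mrank_le_urk[OF S mat_subspace_add[OF S M(1) mat_subspace_smult[OF S N]]] by blast
  show "mrank N \<le> urk S" by (rule mrank_le_urk[OF S N])
  show "\<forall>i j. r \<le> i \<and> i < m \<and> s \<le> j \<and> j < n \<longrightarrow> M $$ (i,j) = 0"
    "\<forall>i j. r \<le> i \<and> i < m \<and> s \<le> j \<and> j < n \<longrightarrow> N $$ (i,j) = 0"
    using dec M(1) N unfolding rs_decomposed_def by blast+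
qed

lemma defectiveness_index_le_kernel_dim:
  fixes S :: "'a::field mat set"
  assumes S: "mat_subspace m n S" and M: "M \<in> S"
  shows "defectiveness_index n S \<le> subdim n (mat_kernel M)"
proof -
  have ker: "mat_kernel A \<inter> carrier_vec n = mat_kernel A" if "A \<in> S" for A
    using mat_kernel_carrier mat_subspace_carrier[OF S that] by blast
  let ?P = "\<lambda>k. c_defective_on n (carrier_vec n) k S"
  have "?P 0" unfolding c_defective_on_def by simp
  moreover have "k \<le> n" if "?P k" for k
  proof -
    have "k \<le> subdim n (mat_kernel (0\<^sub>m m n :: 'a mat) \<inter> carrier_vec n)"
      using that mat_subspace_zero[OF S] unfolding c_defective_on_def by blast
    also have "\<dots> = subdim n (mat_kernel (0\<^sub>m m n :: 'a mat))"
      using ker[OF mat_subspace_zero[OF S]] by simp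
    also have "\<dots> \<le> n" using mrank_plus_kernel_dim[of "0\<^sub>m m n :: 'a mat" m n] by simp
    finally show ?thesis .
  qed
  ultimately have "?P (defectiveness_index n S)"
    unfolding defectiveness_index_def by (rule GreatestI_nat)
  then have "defectiveness_index n S \<le> subdim n (mat_kernel M \<inter> carrier_vec n)"
    using M unfolding c_defective_on_def by blast
  then show ?thesis using ker[OF M] by simp
qed

lemma c_defective_on_hyperplane:
  fixes S :: "'a::field mat set"
  assumes S: "mat_subspace m n S" and ll: "ll \<in> carrier_vec n"
    and ker: "\<And>M. M \<in> S \<Longrightarrow> mrank M = urk S \<Longrightarrow> mat_kernel M \<subseteq> {x. ll \<bullet> x = 0}"
  shows "c_defective_on n {x \<in> carrier_vec n. ll \<bullet> x = 0} (defectiveness_index n S) S"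
  unfolding c_defective_on_def
proof
  fix M assume M: "M \<in> S"
  let ?U = "{x \<in> carrier_vec n. ll \<bullet> x = 0}"
  let ?c = "defectiveness_index n S"
  have Mc: "M \<in> carrier_mat m n" using mat_subspace_carrier[OF S M] .
  have kerU: "mat_kernel M \<inter> {x. ll \<bullet> x = 0} = mat_kernel M \<inter> ?U"
    using mat_kernel_carrier[OF Mc] by blast
  show "?c \<le> subdim n (mat_kernel M \<inter> ?U)"
  proof (cases "mrank M = urk S")
    case True
    then have "mat_kernel M \<inter> ?U = mat_kernel M" using ker[OF M] kerU by blast
    then show ?thesis using defectiveness_index_le_kernel_dim[OF S M] by simp
  next
    case False
    obtain M0 where M0: "M0 \<in> S" "mrank M0 = urk S" using urk_attained[OF S] .
    have "mrank M < mrank M0" using False mrank_le_urk[OF S M] M0(2) by simp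
    moreover have "mrank M0 + subdim n (mat_kernel M0) = n"
      using mrank_plus_kernel_dim[OF mat_subspace_carrier[OF S M0(1)]] .
    moreover have "?c \<le> subdim n (mat_kernel M0)" by (rule defectiveness_index_le_kernel_dim[OF S M0(1)])
    moreover have "subdim n (mat_kernel M) \<le> subdim n (mat_kernel M \<inter> ?U) + 1"
      using kernel_dim_le_Int_hyperplane[OF Mc ll] kerU by simp
    ultimately show ?thesis using mrank_plus_kernel_dim[OF Mc] by linarith
  qed
qed

lemma max_rank_kernel_in_hyperplane:
  fixes S :: "'a::field mat set"
  assumes S: "mat_subspace m n S"
    and fld: "infinite (UNIV :: 'a set) \<or> urk S < card (UNIV :: 'a set)"
    and P: "P \<in> carrier_mat m m" "invertible_mat P" and Q: "Q \<in> carrier_mat n n" "invertible_mat Q"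
    and Q': "Q' \<in> carrier_mat n n" "Q * Q' = 1\<^sub>m n"
    and dec: "rs_decomposed m n r s ((\<lambda>M. P * M * Q) ` S)" and s: "0 < s" "s \<le> n"
    and N: "N \<in> (\<lambda>M. P * M * Q) ` S" and lowN: "mrank (mat (m - r) s (\<lambda>(i,j). N $$ (i + r, j))) = s"
    and M: "M \<in> S" "mrank M = urk S"
  shows "mat_kernel M \<subseteq> {x. row Q' 0 \<bullet> x = 0}"
proof
  fix x assume x: "x \<in> mat_kernel M"
  have Mc: "M \<in> carrier_mat m n" using mat_subspace_carrier[OF S M(1)] .
  have "P * M * Q \<in> (\<lambda>M. P * M * Q) ` S" using M(1) by blast
  moreover have "mrank (P * M * Q) = urk ((\<lambda>M. P * M * Q) ` S)"
    using M(2) mrank_mult_invertible[OF Mc P Q] urk_equiv_image[OF S P Q] by simp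
  moreover note fld[folded urk_equiv_image[OF S P Q]]
  ultimately have "(Q' *\<^sub>v x) $ 0 = 0"
    using mat_subspace_decomposed_kernel_vanishes[OF mat_subspace_equiv_image[OF S P(1) Q(1)] _ dec s(2) N lowN
        _ _ mat_kernel_mult_inverse_right[OF Mc P(1) Q(1) Q' x]] s(1) by blast
  then show "x \<in> {x. row Q' 0 \<bullet> x = 0}"
    using Q'(1) mat_kernelD(1)[OF Mc x] s by simp
qed

lemma lin_hyperplane_row_inverse:
  fixes Q :: "'a::field mat"
  assumes Q: "Q \<in> carrier_mat n n" and Q': "Q' \<in> carrier_mat n n" "Q' * Q = 1\<^sub>m n" and n: "0 < n"
  shows "lin_hyperplane n {x \<in> carrier_vec n. row Q' 0 \<bullet> x = 0}"
proof (rule lin_hyperplane_orthogonal)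
  show "row Q' 0 \<in> carrier_vec n" using Q'(1) n by simp
  have "row Q' 0 \<bullet> col Q 0 = 1"
    using arg_cong[OF Q'(2), of "\<lambda>A. A $$ (0, 0)"] Q Q'(1) n by simp
  moreover have "col Q 0 \<in> carrier_vec n" using Q n by simp
  ultimately show "row Q' 0 \<noteq> 0\<^sub>v n" by auto
qed

theorem mainTheorem12:
  fixes S :: "'a::field mat set" and m n :: nat
  assumes "mat_subspace m n S"
    and "semi_primitive m n S"
    and "infinite (UNIV :: 'a set) \<or> card (UNIV :: 'a set) > urk S"
    and "n > 0"
  shows "column_property m n S"
  unfolding column_property_def
proof (intro allI impI)
  fix r s S'
  assume rs: "r \<le> m \<and> 1 \<le> s \<and> s \<le> n" and S': "mat_space_equiv m n S' S \<and> rs_decomposed m n r s S'"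
  then obtain P Q where P: "P \<in> carrier_mat m m" "invertible_mat P"
    and Q: "Q \<in> carrier_mat n n" "invertible_mat Q" and S'_def: "S' = (\<lambda>M. P * M * Q) ` S"
    unfolding mat_space_equiv_def by blast
  obtain Q' where Q': "Q' \<in> carrier_mat n n" "Q * Q' = 1\<^sub>m n" "Q' * Q = 1\<^sub>m n"
    using invertible_mat_obtain_inverse[OF Q] by blast
  show "defective s (lower_space m r s S')"
  proof (rule ccontr)
    assume "\<not> defective s (lower_space m r s S')"
    then obtain N where N: "N \<in> S'" and lowN: "mrank (mat (m - r) s (\<lambda>(i,j). N $$ (i + r, j))) = s"
      unfolding defective_def lower_space_def by auto
    have "c_defective_on n {x \<in> carrier_vec n. row Q' 0 \<bullet> x = 0} (defectiveness_index n S) S"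
      using max_rank_kernel_in_hyperplane[OF assms(1) _ P Q Q'(1,2) _ _ _ N[unfolded S'_def] lowN]
        assms(3) S' rs Q'(1) assms(4) unfolding S'_def
      by (intro c_defective_on_hyperplane[OF assms(1)]) auto
    moreover have "lin_hyperplane n {x \<in> carrier_vec n. row Q' 0 \<bullet> x = 0}"
      by (rule lin_hyperplane_row_inverse[OF Q(1) Q'(1,3) assms(4)])
    ultimately show False using assms(2) unfolding semi_primitive_def by blast
  qed
qed

end
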